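(* Let $\lambda>0$, $\gamma>2$, $c>0$ and $\rho>0$ be fixed, and let $W_e>0$. Define $$g(r)=r^{-\gamma-2}\Big(\gamma^2+\frac{4W_e}{c^2}r^2\Big),\qquad Z(s)=\int_0^\infty\big[1-e^{-s g(r)}\big]r\,dr,\qquad \mathrm{CRB}_{\mathrm{LB}}=\frac{4}{\rho}\int_0^\infty e^{-2\pi\lambda Z(s)}\,ds,$$ and $$\mathrm{CRB}_{\mathrm{LB,N}}=\frac{4}{\rho\gamma^2}\Big(\pi\lambda\,\Gamma\Big(\frac{\gamma}{\gamma+2}\Big)\Big)^{-\gamma/2-1}\Gamma\Big(2+\frac{\gamma}{2}\Big).$$ Then $$|\mathrm{CRB}_{\mathrm{LB,N}}-\mathrm{CRB}_{\mathrm{LB}}|=O(W_e),$$ i.e. it is bounded by a constant (independent of $W_e$) times $W_e$. Hence $\mathrm{CRB}_{\mathrm{LB}}$ converges to $\mathrm{CRB}_{\mathrm{LB,N}}$ as $W_e\to 0$.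
   Context: Here $\lambda$ is the sensor density of a homogeneous Poisson point process of sensors, $\gamma$ is the path-loss exponent, $c$ is the speed of light, $\rho$ is a signal-to-noise ratio constant, and $W_e$ is the effective bandwidth of the transmitted signal. $\Gamma$ denotes the Gamma function. *)

theory Defs
  imports "HOL-Analysis.Analysis"
begin

definition gfun :: "real \<Rightarrow> real \<Rightarrow> real \<Rightarrow> real \<Rightarrow> real" where
  "gfun \<gamma> c We r = r powr (-\<gamma> - 2) * (\<gamma>\<^sup>2 + 4 * We / c\<^sup>2 * r\<^sup>2)"

definition Zfun :: "real \<Rightarrow> real \<Rightarrow> real \<Rightarrow> real \<Rightarrow> real" where
  "Zfun \<gamma> c We s = (LBINT r:{0<..}. (1 - exp (- s * gfun \<gamma> c We r)) * r)"

definition CRB_LB :: "real \<Rightarrow> real \<Rightarrow> real \<Rightarrow> real \<Rightarrow> real \<Rightarrow> real" where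
  "CRB_LB lam \<gamma> c \<rho> We = 4 / \<rho> * (LBINT s:{0<..}. exp (- 2 * pi * lam * Zfun \<gamma> c We s))"

definition CRB_LB_N :: "real \<Rightarrow> real \<Rightarrow> real \<Rightarrow> real" where
  "CRB_LB_N lam \<gamma> \<rho> = 4 / (\<rho> * \<gamma>\<^sup>2) *
     (pi * lam * Gamma (\<gamma> / (\<gamma> + 2))) powr (- \<gamma> / 2 - 1) * Gamma (2 + \<gamma> / 2)"

end

theory Submission
  imports Defs
begin

text \<open>
  For W_e = 0 the function g is gamma^2 r^(-gamma-2), so Z(s) = kappa s^b with b = 2/(gamma+2) in
  closed form, and the s-integral defining CRB_LB becomes a Gamma integral equal to CRB_LB_N.
  The W_e-part of g adds y = 4 s W_e r^(-gamma) / c^2 to the exponent x = s gamma^2 r^(-gamma-2); since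
  exp(-x) - exp(-(x+y)) <= y exp(-x), Z grows by at most W_e K s^(2b), where K contains the integral
  of r^(1-gamma) exp(-x), which is finite because gamma > 2. The same inequality applied to
  exp(-2 pi lam Z(s)) bounds the difference of the two s-integrals by W_e times a moment of
  exp(-2 pi lam kappa s^b). All closed forms come from the layer-cake formula: the integral of
  w exp(-phi) is the Laplace transform of the weighted distribution function of phi, which is a
  power of t in every case below.
\<close>

section \<open>Exponential integrals via the layer-cake formula\<close>

lemma nn_integral_exp_neg_atLeast:
  "(\<integral>\<^sup>+t. ennreal (exp (-t)) * indicator {y..} t \<partial>lborel) = ennreal (exp (-y))"
proof -
  have "((\<lambda>t::real. exp (-t)) \<longlongrightarrow> 0) at_top"
    by (rule filterlim_compose[OF exp_at_bot filterlim_uminus_at_bot_at_top])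
  from tendsto_minus[OF this]
  have "(\<integral>\<^sup>+t. ennreal (exp (-t)) * indicator {y..} t \<partial>lborel) = 0 - (- exp (-y))"
    by (intro nn_integral_FTC_atLeast) (auto intro!: derivative_eq_intros)
  then show ?thesis by simp
qed

lemma nn_integral_exp_neg_atLeastLessThan:
  "(\<integral>\<^sup>+t. ennreal (exp (-t)) * indicator {0..<y} t \<partial>lborel) = ennreal (1 - exp (-y))"
proof (cases "y \<le> 0")
  case True
  then show ?thesis by (simp add: ennreal_eq_0_iff)
next
  case False
  have "ennreal 1 = (\<integral>\<^sup>+t. ennreal (exp (-t)) * indicator {0..} t \<partial>lborel)"
    using nn_integral_exp_neg_atLeast[of 0] by simp
  also have "\<dots> = (\<integral>\<^sup>+t. ennreal (exp (-t)) * indicator {0..<y} t + ennreal (exp (-t)) * indicator {y..} t \<partial>lborel)"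
    using False by (intro nn_integral_cong) (auto simp: indicator_def)
  also have "\<dots> = (\<integral>\<^sup>+t. ennreal (exp (-t)) * indicator {0..<y} t \<partial>lborel) + ennreal (exp (-y))"
    by (subst nn_integral_add) (auto simp: nn_integral_exp_neg_atLeast)
  finally have *: "ennreal 1 = (\<integral>\<^sup>+t. ennreal (exp (-t)) * indicator {0..<y} t \<partial>lborel) + ennreal (exp (-y))" .
  have "ennreal (1 - exp (-y)) = ennreal 1 - ennreal (exp (-y))"
    by (subst ennreal_minus) auto
  also have "\<dots> = (\<integral>\<^sup>+t. ennreal (exp (-t)) * indicator {0..<y} t \<partial>lborel)"
    unfolding * by (rule ennreal_add_diff_cancel_right) simp
  finally show ?thesis by simp
qed

lemma nn_integral_exp_neg_layer_cake:
  assumes [measurable]: "\<phi> \<in> borel_measurable borel" "w \<in> borel_measurable borel"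
    and "\<And>x. 0 \<le> w x"
  shows "(\<integral>\<^sup>+x. ennreal (w x * exp (- \<phi> x)) \<partial>lborel) =
    (\<integral>\<^sup>+t. ennreal (exp (-t)) * (\<integral>\<^sup>+x. ennreal (w x) * indicator {x. \<phi> x \<le> t} x \<partial>lborel) \<partial>lborel)"
proof -
  have "(\<integral>\<^sup>+x. ennreal (w x * exp (- \<phi> x)) \<partial>lborel) =
     (\<integral>\<^sup>+x. ennreal (w x) * (\<integral>\<^sup>+t. ennreal (exp (-t)) * indicator {\<phi> x..} t \<partial>lborel) \<partial>lborel)"
    using assms(3) by (intro nn_integral_cong) (simp add: nn_integral_exp_neg_atLeast ennreal_mult)
  also have "\<dots> = (\<integral>\<^sup>+x. (\<integral>\<^sup>+t. ennreal (w x) * ennreal (exp (-t)) * (if \<phi> x \<le> t then 1 else 0) \<partial>lborel) \<partial>lborel)"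
    by (intro nn_integral_cong)
      (auto simp: nn_integral_cmult[symmetric] indicator_def mult.assoc intro!: nn_integral_cong)
  also have "\<dots> = (\<integral>\<^sup>+t. (\<integral>\<^sup>+x. ennreal (w x) * ennreal (exp (-t)) * (if \<phi> x \<le> t then 1 else 0) \<partial>lborel) \<partial>lborel)"
    by (rule lborel_pair.Fubini'[symmetric]) measurable
  also have "\<dots> = (\<integral>\<^sup>+t. ennreal (exp (-t)) * (\<integral>\<^sup>+x. ennreal (w x) * indicator {x. \<phi> x \<le> t} x \<partial>lborel) \<partial>lborel)"
    by (intro nn_integral_cong)
      (auto simp: nn_integral_cmult[symmetric] indicator_def mult_ac intro!: nn_integral_cong)
  finally show ?thesis .
qed

lemma nn_integral_one_minus_exp_neg_layer_cake:
  assumes [measurable]: "\<phi> \<in> borel_measurable borel" "w \<in> borel_measurable borel"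
    and "\<And>x. 0 \<le> w x"
  shows "(\<integral>\<^sup>+x. ennreal (w x * (1 - exp (- \<phi> x))) \<partial>lborel) =
    (\<integral>\<^sup>+t. ennreal (exp (-t)) * indicator {0..} t *
      (\<integral>\<^sup>+x. ennreal (w x) * indicator {x. t < \<phi> x} x \<partial>lborel) \<partial>lborel)"
proof -
  have "(\<integral>\<^sup>+x. ennreal (w x * (1 - exp (- \<phi> x))) \<partial>lborel) =
     (\<integral>\<^sup>+x. ennreal (w x) * (\<integral>\<^sup>+t. ennreal (exp (-t)) * indicator {0..<\<phi> x} t \<partial>lborel) \<partial>lborel)"
    using assms(3)
    by (intro nn_integral_cong) (simp add: nn_integral_exp_neg_atLeastLessThan ennreal_mult')
  also have "\<dots> = (\<integral>\<^sup>+x. (\<integral>\<^sup>+t. ennreal (w x) * ennreal (exp (-t)) * (if 0 \<le> t \<and> t < \<phi> x then 1 else 0) \<partial>lborel) \<partial>lborel)"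
    by (intro nn_integral_cong)
      (auto simp: nn_integral_cmult[symmetric] indicator_def mult.assoc intro!: nn_integral_cong)
  also have "\<dots> = (\<integral>\<^sup>+t. (\<integral>\<^sup>+x. ennreal (w x) * ennreal (exp (-t)) * (if 0 \<le> t \<and> t < \<phi> x then 1 else 0) \<partial>lborel) \<partial>lborel)"
    by (rule lborel_pair.Fubini'[symmetric]) measurable
  also have "\<dots> = (\<integral>\<^sup>+t. ennreal (exp (-t)) * indicator {0..} t *
      (\<integral>\<^sup>+x. ennreal (w x) * indicator {x. t < \<phi> x} x \<partial>lborel) \<partial>lborel)"
    by (intro nn_integral_cong)
      (auto simp: nn_integral_cmult[symmetric] indicator_def mult_ac intro!: nn_integral_cong)
  finally show ?thesis .
qed

lemma nn_integral_exp_neg_Gamma: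
  assumes "p > -1" "C \<ge> 0"
    and "\<And>t. t > 0 \<Longrightarrow> f t = ennreal (C * t powr p)" "\<And>t. t < 0 \<Longrightarrow> f t = 0"
  shows "(\<integral>\<^sup>+t. ennreal (exp (-t)) * f t \<partial>lborel) = ennreal (C * Gamma (p + 1))"
proof -
  have "AE t in lborel. ennreal (exp (-t)) * f t = ennreal C * (ennreal (t powr p / exp t) * indicator {0..} t)"
    using AE_lborel_singleton[of 0]
  proof eventually_elim
    case (elim t)
    show ?case
    proof (cases "t > 0")
      case True
      then show ?thesis using assms(2) assms(3)[of t]
        by (simp add: ennreal_mult[symmetric] exp_minus field_simps)
    qed (use elim assms(4)[of t] in simp)
  qed
  then have "(\<integral>\<^sup>+t. ennreal (exp (-t)) * f t \<partial>lborel)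
      = ennreal C * (\<integral>\<^sup>+t. ennreal (t powr p / exp t) * indicator {0..} t \<partial>lborel)"
    by (simp add: nn_integral_cong_AE nn_integral_cmult)
  also have "(\<integral>\<^sup>+t. ennreal (t powr p / exp t) * indicator {0..} t \<partial>lborel) = ennreal (Gamma (p + 1))"
    using Gamma_integral_real[of "p + 1"] assms(1)
    by (intro nn_integral_has_integral_lebesgue') auto
  finally show ?thesis using assms(2) by (simp add: ennreal_mult')
qed

lemma nn_integral_powr_atLeastAtMost:
  assumes "0 \<le> R" "p > -1"
  shows "(\<integral>\<^sup>+x. ennreal (x powr p) * indicator {0..R} x \<partial>lborel) = ennreal (R powr (p + 1) / (p + 1))"
  by (rule nn_integral_has_integral_lebesgue'[OF _ has_integral_powr_from_0]) (use assms in auto)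

lemma nn_integral_powr_atLeast:
  assumes "0 < R" "p < -1"
  shows "(\<integral>\<^sup>+x. ennreal (x powr p) * indicator {R..} x \<partial>lborel) = ennreal (- (R powr (p + 1)) / (p + 1))"
  by (rule nn_integral_has_integral_lebesgue'[OF _ has_integral_powr_to_inf]) (use assms in auto)

lemma powr_less_powr_iff:
  fixes x y a :: real
  assumes "0 < a" "0 \<le> x" "0 \<le> y"
  shows "x powr a < y powr a \<longleftrightarrow> x < y"
  using assms by (meson not_less powr_less_mono2 powr_mono2 less_imp_le)

lemma powr_le_powr_iff:
  fixes x y a :: real
  assumes "0 < a" "0 \<le> x" "0 \<le> y"
  shows "x powr a \<le> y powr a \<longleftrightarrow> x \<le> y"
  using powr_less_powr_iff[OF assms(1,3,2)] by linarith

lemma set_integral_of_nn_integral: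
  fixes f :: "'a \<Rightarrow> real"
  assumes "S \<in> sets M" "f \<in> borel_measurable M" "\<And>x. x \<in> S \<Longrightarrow> 0 \<le> f x" "0 \<le> I"
    and "(\<integral>\<^sup>+x. ennreal (indicator S x * f x) \<partial>M) = ennreal I"
  shows "set_integrable M S f" and "(LINT x:S|M. f x) = I"
proof -
  have "has_bochner_integral M (\<lambda>x. indicator S x * f x) I"
    using assms by (intro has_bochner_integral_nn_integral) (auto simp: indicator_def)
  then show "set_integrable M S f" "(LINT x:S|M. f x) = I"
    unfolding set_integrable_def set_lebesgue_integral_def by (auto simp: has_bochner_integral_iff)
qed

lemma nn_integral_id_superlevel_powr_neg:
  fixes k a t :: real
  assumes k: "k > 0" and a: "a > 0" and t: "t > 0"
  shows "(\<integral>\<^sup>+r. ennreal (indicator {0<..} r * r) * indicator {r. t < k * r powr (-a)} r \<partial>lborel)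
    = ennreal (k powr (2/a) / 2 * t powr (- (2/a)))"
proof -
  define R where "R = (k/t) powr (1/a)"
  have R: "R > 0" "R powr a = k/t" using k t a by (auto simp: R_def powr_powr)
  have threshold: "t < k * r powr (-a) \<longleftrightarrow> r < R" if "r > 0" for r
  proof -
    have "t < k * r powr (-a) \<longleftrightarrow> r powr a < R powr a"
      using that t k by (simp add: R powr_minus field_simps)
    also have "\<dots> \<longleftrightarrow> r < R" using that R a by (intro powr_less_powr_iff) auto
    finally show ?thesis .
  qed
  have "AE r in lborel. ennreal (indicator {0<..} r * r) * indicator {r. t < k * r powr (-a)} r
     = ennreal (r powr 1) * indicator {0..R} r"
    using AE_lborel_singleton[of R]
  proof eventually_elim
    case (elim r)
    then show ?case by (cases "r > 0") (auto simp: indicator_def threshold)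
  qed
  then have "(\<integral>\<^sup>+r. ennreal (indicator {0<..} r * r) * indicator {r. t < k * r powr (-a)} r \<partial>lborel)
     = ennreal (R powr (1 + 1) / (1 + 1))"
    using nn_integral_powr_atLeastAtMost[of R 1] R by (simp add: nn_integral_cong_AE)
  also have "R powr (1 + 1) / (1 + 1) = k powr (2/a) / 2 * t powr (- (2/a))"
    using k t a by (simp add: R_def powr_powr powr_divide powr_minus field_simps)
  finally show ?thesis .
qed

lemma nn_integral_powr_sublevel_powr_neg:
  fixes k a e t :: real
  assumes k: "k > 0" and a: "a > 0" and e: "e < -1" and t: "t > 0"
  shows "(\<integral>\<^sup>+r. ennreal (indicator {0<..} r * r powr e) * indicator {r. k * r powr (-a) \<le> t} r \<partial>lborel)
    = ennreal (k powr ((e + 1)/a) / (- (e + 1)) * t powr (- (e + 1)/a))"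
proof -
  define R where "R = (k/t) powr (1/a)"
  have R: "R > 0" "R powr a = k/t" using k t a by (auto simp: R_def powr_powr)
  have threshold: "k * r powr (-a) \<le> t \<longleftrightarrow> R \<le> r" if "r > 0" for r
  proof -
    have "k * r powr (-a) \<le> t \<longleftrightarrow> R powr a \<le> r powr a"
      using that t k by (simp add: R powr_minus field_simps)
    also have "\<dots> \<longleftrightarrow> R \<le> r" using that R a by (intro powr_le_powr_iff) auto
    finally show ?thesis .
  qed
  have "ennreal (indicator {0<..} r * r powr e) * indicator {r. k * r powr (-a) \<le> t} r
     = ennreal (r powr e) * indicator {R..} r" for r
    by (cases "r > 0") (use R in \<open>auto simp: indicator_def threshold\<close>)
  then have "(\<integral>\<^sup>+r. ennreal (indicator {0<..} r * r powr e) * indicator {r. k * r powr (-a) \<le> t} r \<partial>lborel)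
     = ennreal (- (R powr (e + 1)) / (e + 1))"
    using nn_integral_powr_atLeast[of R e] R e by simp
  also have "- (R powr (e + 1)) / (e + 1) = k powr ((e + 1)/a) / (- (e + 1)) * t powr (- (e + 1)/a)"
  proof -
    have R_powr: "R powr (e + 1) = k powr ((e + 1)/a) / t powr ((e + 1)/a)"
      using k t by (simp add: R_def powr_powr powr_divide)
    have t_powr: "t powr (- (e + 1)/a) = 1 / t powr ((e + 1)/a)"
      by (simp only: minus_divide_left[symmetric] powr_minus_divide)
    show ?thesis unfolding R_powr t_powr using e t by (simp add: divide_simps algebra_simps)
  qed
  finally show ?thesis .
qed

lemma nn_integral_powr_sublevel_powr:
  fixes A b q t :: real
  assumes A: "A > 0" and b: "b > 0" and q: "q > -1" and t: "t > 0"
  shows "(\<integral>\<^sup>+s. ennreal (indicator {0<..} s * s powr q) * indicator {s. A * s powr b \<le> t} s \<partial>lborel)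
    = ennreal ((1/A) powr ((q + 1)/b) / (q + 1) * t powr ((q + 1)/b))"
proof -
  define R where "R = (t/A) powr (1/b)"
  have R: "R > 0" "R powr b = t/A" using A t b by (auto simp: R_def powr_powr)
  have threshold: "A * s powr b \<le> t \<longleftrightarrow> s \<le> R" if "s > 0" for s
  proof -
    have "A * s powr b \<le> t \<longleftrightarrow> s powr b \<le> R powr b"
      using A by (simp add: R field_simps)
    also have "\<dots> \<longleftrightarrow> s \<le> R" using that R b by (intro powr_le_powr_iff) auto
    finally show ?thesis .
  qed
  have "AE s in lborel. ennreal (indicator {0<..} s * s powr q) * indicator {s. A * s powr b \<le> t} s
     = ennreal (s powr q) * indicator {0..R} s"
    using AE_lborel_singleton[of 0]
  proof eventually_elim
    case (elim s)
    then show ?case by (cases "s > 0") (auto simp: indicator_def threshold)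
  qed
  then have "(\<integral>\<^sup>+s. ennreal (indicator {0<..} s * s powr q) * indicator {s. A * s powr b \<le> t} s \<partial>lborel)
     = ennreal (R powr (q + 1) / (q + 1))"
    using nn_integral_powr_atLeastAtMost[of R q] R q by (simp add: nn_integral_cong_AE)
  also have "R powr (q + 1) / (q + 1) = (1/A) powr ((q + 1)/b) / (q + 1) * t powr ((q + 1)/b)"
    using A t b q by (simp add: R_def powr_powr powr_divide field_simps)
  finally show ?thesis .
qed

lemma set_integral_one_minus_exp_neg_powr:
  fixes k a :: real
  assumes k: "k > 0" and a: "a > 2"
  shows "set_integrable lborel {0<..} (\<lambda>r. r * (1 - exp (- (k * r powr (-a)))))"
    and "(LBINT r:{0<..}. r * (1 - exp (- (k * r powr (-a))))) = k powr (2/a) / 2 * Gamma (1 - 2/a)"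
proof -
  have "(\<integral>\<^sup>+r. ennreal (indicator {0<..} r * r * (1 - exp (- (k * r powr (-a))))) \<partial>lborel)
    = (\<integral>\<^sup>+t. ennreal (exp (-t)) * (indicator {0..} t *
        (\<integral>\<^sup>+r. ennreal (indicator {0<..} r * r) * indicator {r. t < k * r powr (-a)} r \<partial>lborel)) \<partial>lborel)"
    by (subst nn_integral_one_minus_exp_neg_layer_cake) (auto simp: mult.assoc indicator_def)
  also have "\<dots> = ennreal (k powr (2/a) / 2 * Gamma (- (2/a) + 1))"
    using k a by (intro nn_integral_exp_neg_Gamma) (auto simp: nn_integral_id_superlevel_powr_neg)
  finally have nn: "(\<integral>\<^sup>+r. ennreal (indicator {0<..} r * (r * (1 - exp (- (k * r powr (-a)))))) \<partial>lborel)
      = ennreal (k powr (2/a) / 2 * Gamma (1 - 2/a))"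
    by (simp add: mult.assoc add.commute)
  have "0 \<le> k powr (2/a) / 2 * Gamma (1 - 2/a)"
    using a by auto
  moreover have "0 \<le> r * (1 - exp (- (k * r powr (-a))))" if "r \<in> {0<..}" for r
    using that k by simp
  ultimately show "set_integrable lborel {0<..} (\<lambda>r. r * (1 - exp (- (k * r powr (-a)))))"
    and "(LBINT r:{0<..}. r * (1 - exp (- (k * r powr (-a))))) = k powr (2/a) / 2 * Gamma (1 - 2/a)"
    using set_integral_of_nn_integral[OF _ _ _ _ nn] by auto
qed

lemma set_integral_powr_exp_neg_powr_neg:
  fixes k a e :: real
  assumes k: "k > 0" and a: "a > 0" and e: "e < -1" "e + 1 > -a"
  shows "set_integrable lborel {0<..} (\<lambda>r. r powr e * exp (- (k * r powr (-a))))"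
    and "(LBINT r:{0<..}. r powr e * exp (- (k * r powr (-a))))
           = k powr ((e + 1)/a) / (- (e + 1)) * Gamma (- (e + 1)/a + 1)"
proof -
  have "(\<integral>\<^sup>+r. ennreal (indicator {0<..} r * r powr e * exp (- (k * r powr (-a)))) \<partial>lborel)
    = (\<integral>\<^sup>+t. ennreal (exp (-t)) *
        (\<integral>\<^sup>+r. ennreal (indicator {0<..} r * r powr e) * indicator {r. k * r powr (-a) \<le> t} r \<partial>lborel) \<partial>lborel)"
    by (subst nn_integral_exp_neg_layer_cake) (auto simp: mult.assoc indicator_def)
  also have "\<dots> = ennreal (k powr ((e + 1)/a) / (- (e + 1)) * Gamma (- (e + 1)/a + 1))"
  proof (rule nn_integral_exp_neg_Gamma)
    show "- (e + 1)/a > -1" "0 \<le> k powr ((e + 1)/a) / (- (e + 1))"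
      using a e by (auto simp: field_simps)
  next
    fix t :: real assume "t < 0"
    then have "\<not> k * r powr (-a) \<le> t" if "r > 0" for r
      using k that by (smt (verit) mult_pos_pos powr_gt_zero)
    then have "(\<lambda>r. ennreal (indicator {0<..} r * r powr e) * indicator {r. k * r powr (-a) \<le> t} r) = (\<lambda>_. 0)"
      by (auto simp: indicator_def)
    then show "(\<integral>\<^sup>+r. ennreal (indicator {0<..} r * r powr e) * indicator {r. k * r powr (-a) \<le> t} r \<partial>lborel) = 0"
      by simp
  qed (use k a e in \<open>simp add: nn_integral_powr_sublevel_powr_neg\<close>)
  finally have nn: "(\<integral>\<^sup>+r. ennreal (indicator {0<..} r * (r powr e * exp (- (k * r powr (-a))))) \<partial>lborel)
      = ennreal (k powr ((e + 1)/a) / (- (e + 1)) * Gamma (- (e + 1)/a + 1))"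
    by (simp add: mult.assoc)
  have "0 \<le> k powr ((e + 1)/a) / (- (e + 1)) * Gamma (- (e + 1)/a + 1)"
    using a e by (auto intro!: divide_nonneg_pos simp: field_simps)
  then show "set_integrable lborel {0<..} (\<lambda>r. r powr e * exp (- (k * r powr (-a))))"
    and "(LBINT r:{0<..}. r powr e * exp (- (k * r powr (-a))))
           = k powr ((e + 1)/a) / (- (e + 1)) * Gamma (- (e + 1)/a + 1)"
    using set_integral_of_nn_integral[OF _ _ _ _ nn] by auto
qed

lemma set_integral_powr_exp_neg_powr:
  fixes A b q :: real
  assumes A: "A > 0" and b: "b > 0" and q: "q > -1"
  shows "set_integrable lborel {0<..} (\<lambda>s. s powr q * exp (- (A * s powr b)))"
    and "(LBINT s:{0<..}. s powr q * exp (- (A * s powr b)))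
           = (1/A) powr ((q + 1)/b) / (q + 1) * Gamma ((q + 1)/b + 1)"
proof -
  have "(\<integral>\<^sup>+s. ennreal (indicator {0<..} s * s powr q * exp (- (A * s powr b))) \<partial>lborel)
    = (\<integral>\<^sup>+t. ennreal (exp (-t)) *
        (\<integral>\<^sup>+s. ennreal (indicator {0<..} s * s powr q) * indicator {s. A * s powr b \<le> t} s \<partial>lborel) \<partial>lborel)"
    by (subst nn_integral_exp_neg_layer_cake) (auto simp: mult.assoc indicator_def)
  also have "\<dots> = ennreal ((1/A) powr ((q + 1)/b) / (q + 1) * Gamma ((q + 1)/b + 1))"
  proof (rule nn_integral_exp_neg_Gamma)
    show "(q + 1)/b > -1" "0 \<le> (1/A) powr ((q + 1)/b) / (q + 1)" using b q by (auto simp: field_simps)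
  next
    fix t :: real assume "t < 0"
    then have "\<not> A * s powr b \<le> t" if "s > 0" for s
      using A that by (smt (verit) mult_pos_pos powr_gt_zero)
    then have "(\<lambda>s. ennreal (indicator {0<..} s * s powr q) * indicator {s. A * s powr b \<le> t} s) = (\<lambda>_. 0)"
      by (auto simp: indicator_def)
    then show "(\<integral>\<^sup>+s. ennreal (indicator {0<..} s * s powr q) * indicator {s. A * s powr b \<le> t} s \<partial>lborel) = 0"
      by simp
  qed (use A b q in \<open>simp add: nn_integral_powr_sublevel_powr\<close>)
  finally have nn: "(\<integral>\<^sup>+s. ennreal (indicator {0<..} s * (s powr q * exp (- (A * s powr b)))) \<partial>lborel)
      = ennreal ((1/A) powr ((q + 1)/b) / (q + 1) * Gamma ((q + 1)/b + 1))"
    by (simp add: mult.assoc)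
  have "0 < (q + 1)/b + 1" using b q by (simp add: add_pos_pos)
  then have "0 \<le> (1/A) powr ((q + 1)/b) / (q + 1) * Gamma ((q + 1)/b + 1)"
    using q by auto
  then show "set_integrable lborel {0<..} (\<lambda>s. s powr q * exp (- (A * s powr b)))"
    and "(LBINT s:{0<..}. s powr q * exp (- (A * s powr b)))
           = (1/A) powr ((q + 1)/b) / (q + 1) * Gamma ((q + 1)/b + 1)"
    using set_integral_of_nn_integral[OF _ _ _ _ nn] by auto
qed

section \<open>Perturbing the exponent of an integrand\<close>

lemma exp_neg_diff_le:
  fixes x y :: real
  shows "exp (-x) - exp (-y) \<le> exp (-x) * (y - x)"
proof -
  have "exp (-x) - exp (-y) = exp (-x) * (1 - exp (- (y - x)))"
    using exp_add[of "-x" "- (y - x)"] by (simp add: algebra_simps)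
  also have "\<dots> \<le> exp (-x) * (y - x)"
    using exp_ge_add_one_self[of "x - y"] by (intro mult_left_mono) (simp_all add: algebra_simps)
  finally show ?thesis .
qed

lemma mult_one_minus_exp_neg_add_bounds:
  fixes r D x \<gamma> :: real
  assumes r: "r > 0" and D: "D \<ge> 0"
  shows "r * (1 - exp (-x)) \<le> r * (1 - exp (- (x + D * r powr (-\<gamma>))))"
    and "r * (1 - exp (- (x + D * r powr (-\<gamma>)))) \<le> r * (1 - exp (-x)) + D * (r powr (1 - \<gamma>) * exp (-x))"
proof -
  define y where "y = D * r powr (-\<gamma>)"
  have "y \<ge> 0" using D by (simp add: y_def)
  then show "r * (1 - exp (-x)) \<le> r * (1 - exp (- (x + D * r powr (-\<gamma>))))"
    unfolding y_def[symmetric] using r by (intro mult_left_mono) auto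
  have "r * (1 - exp (- (x + y))) - r * (1 - exp (-x)) = r * (exp (-x) - exp (- (x + y)))"
    by (simp add: algebra_simps)
  also have "\<dots> \<le> r * (exp (-x) * y)"
    using exp_neg_diff_le[of x "x + y"] r by (intro mult_left_mono) auto
  also have "\<dots> = D * (r powr (1 - \<gamma>) * exp (-x))"
    using r by (simp add: y_def powr_diff powr_minus field_simps)
  finally show "r * (1 - exp (- (x + D * r powr (-\<gamma>)))) \<le> r * (1 - exp (-x)) + D * (r powr (1 - \<gamma>) * exp (-x))"
    unfolding y_def by simp
qed

lemma set_integral_sandwich:
  fixes f g h :: "'a \<Rightarrow> real"
  assumes "S \<in> sets M" "g \<in> borel_measurable M"
    and "set_integrable M S f" "set_integrable M S h"
    and "\<And>x. x \<in> S \<Longrightarrow> f x \<le> g x" "\<And>x. x \<in> S \<Longrightarrow> g x \<le> h x"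
  shows "set_integrable M S g"
    and "(LINT x:S|M. f x) \<le> (LINT x:S|M. g x)" "(LINT x:S|M. g x) \<le> (LINT x:S|M. h x)"
proof -
  show g: "set_integrable M S g"
  proof (rule set_integrable_bound)
    show "set_integrable M S (\<lambda>x. \<bar>f x\<bar> + \<bar>h x\<bar>)"
      using assms(3,4) by (intro set_integral_add set_integrable_abs)
    show "set_borel_measurable M S g"
      using assms(1,2) unfolding set_borel_measurable_def by measurable
    show "AE x in M. x \<in> S \<longrightarrow> norm (g x) \<le> norm (\<bar>f x\<bar> + \<bar>h x\<bar>)"
      using assms(5,6) by (intro AE_I2) force
  qed
  show "(LINT x:S|M. f x) \<le> (LINT x:S|M. g x)" "(LINT x:S|M. g x) \<le> (LINT x:S|M. h x)"
    using assms g by (auto intro: set_integral_mono)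
qed

lemma set_integral_exp_neg_perturbation:
  fixes f g v :: "'a \<Rightarrow> real"
  assumes "S \<in> sets M" "g \<in> borel_measurable M"
    and int_f: "set_integrable M S (\<lambda>x. exp (- f x))"
    and int_v: "set_integrable M S (\<lambda>x. v x * exp (- f x))"
    and "\<And>x. x \<in> S \<Longrightarrow> f x \<le> g x" "\<And>x. x \<in> S \<Longrightarrow> g x \<le> f x + \<epsilon> * v x"
  shows "\<bar>(LINT x:S|M. exp (- f x)) - (LINT x:S|M. exp (- g x))\<bar>
    \<le> \<epsilon> * (LINT x:S|M. v x * exp (- f x))"
proof -
  have lower: "exp (- f x) - \<epsilon> * (v x * exp (- f x)) \<le> exp (- g x)" if "x \<in> S" for x
  proof -
    have "exp (- f x) - exp (- g x) \<le> exp (- f x) * (\<epsilon> * v x)"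
      using exp_neg_diff_le[of "f x" "g x"] mult_left_mono[OF assms(6)[OF that], of "exp (- f x)"]
      by (simp add: algebra_simps)
    then show ?thesis by (simp add: algebra_simps)
  qed
  have upper: "exp (- g x) \<le> exp (- f x)" if "x \<in> S" for x
    using assms(5)[OF that] by simp
  have int_lower: "set_integrable M S (\<lambda>x. exp (- f x) - \<epsilon> * (v x * exp (- f x)))"
    using int_f int_v by (intro set_integral_diff set_integrable_mult_right)
  have "(\<lambda>x. exp (- g x)) \<in> borel_measurable M" using assms(2) by measurable
  note sandwich = set_integral_sandwich[OF assms(1) this int_lower int_f lower upper]
  have "(LINT x:S|M. exp (- f x) - \<epsilon> * (v x * exp (- f x)))
      = (LINT x:S|M. exp (- f x)) - \<epsilon> * (LINT x:S|M. v x * exp (- f x))"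
    using int_f int_v by simp
  then show ?thesis using sandwich(2,3) by linarith
qed

section \<open>Bounds for Z and the Cramer-Rao bounds\<close>

definition Zfun_zero_coeff :: "real \<Rightarrow> real" where
  "Zfun_zero_coeff \<gamma> = (\<gamma>\<^sup>2) powr (2/(\<gamma> + 2)) / 2 * Gamma (\<gamma>/(\<gamma> + 2))"

definition Zfun_We_coeff :: "real \<Rightarrow> real \<Rightarrow> real" where
  "Zfun_We_coeff \<gamma> c = 4 / c\<^sup>2 * (\<gamma>\<^sup>2) powr ((2 - \<gamma>)/(\<gamma> + 2)) / (\<gamma> - 2) * Gamma (2 * \<gamma>/(\<gamma> + 2))"

lemma borel_measurable_Zfun: "Zfun \<gamma> c We \<in> borel_measurable lborel"
  unfolding Zfun_def set_lebesgue_integral_def gfun_def by measurable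

lemma gfun_eq:
  assumes "r > 0"
  shows "gfun \<gamma> c We r = \<gamma>\<^sup>2 * r powr (- (\<gamma> + 2)) + 4 * We / c\<^sup>2 * r powr (-\<gamma>)"
proof -
  have "r powr (- \<gamma> - 2) * r powr 2 = r powr (-\<gamma>)" by (simp flip: powr_add)
  then have "r powr (- \<gamma> - 2) * r\<^sup>2 = r powr (-\<gamma>)" using assms by simp
  then show ?thesis unfolding gfun_def by (simp add: algebra_simps)
qed

lemma Zfun_eq:
  "Zfun \<gamma> c We s = (LBINT r:{0<..}.
      r * (1 - exp (- (s * \<gamma>\<^sup>2 * r powr (- (\<gamma> + 2)) + s * (4 * We / c\<^sup>2) * r powr (-\<gamma>)))))"
  unfolding Zfun_def by (intro set_lebesgue_integral_cong) (auto simp: gfun_eq algebra_simps)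

lemma Zfun_zero_eq:
  assumes "\<gamma> > 0" "s > 0"
  shows "Zfun \<gamma> c 0 s = Zfun_zero_coeff \<gamma> * s powr (2/(\<gamma> + 2))"
proof -
  have "Zfun \<gamma> c 0 s = (LBINT r:{0<..}. r * (1 - exp (- (s * \<gamma>\<^sup>2 * r powr (- (\<gamma> + 2))))))"
    by (simp add: Zfun_eq)
  also have "\<dots> = (s * \<gamma>\<^sup>2) powr (2/(\<gamma> + 2)) / 2 * Gamma (1 - 2/(\<gamma> + 2))"
    using assms by (intro set_integral_one_minus_exp_neg_powr) auto
  also have "1 - 2/(\<gamma> + 2) = \<gamma>/(\<gamma> + 2)" using assms by (simp add: field_simps)
  finally show ?thesis using assms by (simp add: Zfun_zero_coeff_def powr_mult)
qed

lemma Zfun_increment_bounds: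
  fixes \<gamma> c We s :: real
  assumes \<gamma>: "\<gamma> > 2" and We: "We \<ge> 0" and s: "s > 0"
  shows "Zfun \<gamma> c 0 s \<le> Zfun \<gamma> c We s"
    and "Zfun \<gamma> c We s \<le> Zfun \<gamma> c 0 s + s * (4 * We / c\<^sup>2) *
      (LBINT r:{0<..}. r powr (1 - \<gamma>) * exp (- (s * \<gamma>\<^sup>2 * r powr (- (\<gamma> + 2)))))"
proof -
  define k a D where "k = s * \<gamma>\<^sup>2" and "a = \<gamma> + 2" and "D = s * (4 * We / c\<^sup>2)"
  define f0 fW e :: "real \<Rightarrow> real"
    where "f0 = (\<lambda>r. r * (1 - exp (- (k * r powr (-a)))))"
      and "fW = (\<lambda>r. r * (1 - exp (- (k * r powr (-a) + D * r powr (-\<gamma>)))))"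
      and "e = (\<lambda>r. r powr (1 - \<gamma>) * exp (- (k * r powr (-a))))"
  have k: "k > 0" and D: "D \<ge> 0" using s \<gamma> We by (simp_all add: k_def D_def)
  have pointwise: "f0 r \<le> fW r" "fW r \<le> f0 r + D * e r" if "r \<in> {0<..}" for r
    using mult_one_minus_exp_neg_add_bounds[of r D "k * r powr (-a)" \<gamma>] that D
    by (simp_all add: f0_def fW_def e_def)
  have int_f0: "set_integrable lborel {0<..} f0"
    using set_integral_one_minus_exp_neg_powr(1)[OF k, of a] \<gamma> by (simp add: a_def f0_def)
  have int_e: "set_integrable lborel {0<..} e"
    using set_integral_powr_exp_neg_powr_neg(1)[OF k, of a "1 - \<gamma>"] \<gamma> by (simp add: a_def e_def)
  have "fW \<in> borel_measurable lborel" unfolding fW_def by measurable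
  moreover have "set_integrable lborel {0<..} (\<lambda>r. f0 r + D * e r)"
    using int_f0 int_e by (intro set_integral_add set_integrable_mult_right)
  ultimately have "(LBINT r:{0<..}. f0 r) \<le> (LBINT r:{0<..}. fW r)"
    and "(LBINT r:{0<..}. fW r) \<le> (LBINT r:{0<..}. f0 r + D * e r)"
    using set_integral_sandwich[OF _ _ int_f0 _ pointwise] by simp_all
  moreover have "Zfun \<gamma> c 0 s = (LBINT r:{0<..}. f0 r)" and "Zfun \<gamma> c We s = (LBINT r:{0<..}. fW r)"
    by (simp_all add: Zfun_eq f0_def fW_def k_def a_def D_def mult_ac)
  ultimately show "Zfun \<gamma> c 0 s \<le> Zfun \<gamma> c We s"
    and "Zfun \<gamma> c We s \<le> Zfun \<gamma> c 0 s + s * (4 * We / c\<^sup>2) *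
      (LBINT r:{0<..}. r powr (1 - \<gamma>) * exp (- (s * \<gamma>\<^sup>2 * r powr (- (\<gamma> + 2)))))"
    using int_f0 int_e by (simp_all add: D_def e_def k_def a_def)
qed

lemma Zfun_bounds:
  fixes \<gamma> c We s :: real
  assumes \<gamma>: "\<gamma> > 2" and We: "We \<ge> 0" and s: "s > 0"
  shows "Zfun_zero_coeff \<gamma> * s powr (2/(\<gamma> + 2)) \<le> Zfun \<gamma> c We s"
    and "Zfun \<gamma> c We s
      \<le> Zfun_zero_coeff \<gamma> * s powr (2/(\<gamma> + 2)) + We * Zfun_We_coeff \<gamma> c * s powr (4/(\<gamma> + 2))"
proof -
  have Z0: "Zfun \<gamma> c 0 s = Zfun_zero_coeff \<gamma> * s powr (2/(\<gamma> + 2))"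
    using \<gamma> s by (intro Zfun_zero_eq) auto
  then show "Zfun_zero_coeff \<gamma> * s powr (2/(\<gamma> + 2)) \<le> Zfun \<gamma> c We s"
    using Zfun_increment_bounds(1)[OF assms, of c] by simp
  have "s * \<gamma>\<^sup>2 > 0" using s \<gamma> by simp
  from set_integral_powr_exp_neg_powr_neg(2)[OF this, of "\<gamma> + 2" "1 - \<gamma>"] \<gamma>
  have "(LBINT r:{0<..}. r powr (1 - \<gamma>) * exp (- (s * \<gamma>\<^sup>2 * r powr (- (\<gamma> + 2)))))
      = (s * \<gamma>\<^sup>2) powr ((2 - \<gamma>)/(\<gamma> + 2)) / (\<gamma> - 2) * Gamma (2 * \<gamma>/(\<gamma> + 2))"
    by (simp add: field_simps)
  moreover have "4/(\<gamma> + 2) = 1 + (2 - \<gamma>)/(\<gamma> + 2)" using \<gamma> by (simp add: field_simps)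
  then have "s * s powr ((2 - \<gamma>)/(\<gamma> + 2)) = s powr (4/(\<gamma> + 2))"
    using s by (simp add: powr_add)
  ultimately have "s * (4 * We / c\<^sup>2) *
      (LBINT r:{0<..}. r powr (1 - \<gamma>) * exp (- (s * \<gamma>\<^sup>2 * r powr (- (\<gamma> + 2)))))
      = We * Zfun_We_coeff \<gamma> c * s powr (4/(\<gamma> + 2))"
    unfolding Zfun_We_coeff_def using s by (simp add: powr_mult field_simps)
  with Zfun_increment_bounds(2)[OF assms, of c] Z0
  show "Zfun \<gamma> c We s
      \<le> Zfun_zero_coeff \<gamma> * s powr (2/(\<gamma> + 2)) + We * Zfun_We_coeff \<gamma> c * s powr (4/(\<gamma> + 2))"
    by simp
qed

lemma CRB_LB_N_eq:
  fixes lam \<gamma> \<rho> :: real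
  assumes lam: "lam > 0" and \<gamma>: "\<gamma> > 0"
  shows "CRB_LB_N lam \<gamma> \<rho>
    = 4 / \<rho> * (LBINT s:{0<..}. exp (- (2 * pi * lam * Zfun_zero_coeff \<gamma> * s powr (2/(\<gamma> + 2)))))"
proof -
  define G P where "G = Gamma (\<gamma>/(\<gamma> + 2))" and "P = (\<gamma>\<^sup>2) powr (2/(\<gamma> + 2))"
  define A e where "A = pi * lam * G * P" and "e = \<gamma>/2 + 1"
  have G: "G > 0" unfolding G_def using \<gamma> by (intro Gamma_real_pos) simp
  have A: "A > 0" unfolding A_def P_def using lam G \<gamma> by simp
  have "(LBINT s:{0<..}. exp (- (A * s powr (2/(\<gamma> + 2)))))
      = (LBINT s:{0<..}. s powr 0 * exp (- (A * s powr (2/(\<gamma> + 2)))))"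
    by (intro set_lebesgue_integral_cong) auto
  also have "\<dots> = (1/A) powr e * Gamma (e + 1)"
    using set_integral_powr_exp_neg_powr(2)[OF A, of "2/(\<gamma> + 2)" 0] \<gamma> by (simp add: e_def field_simps)
  also have "(1/A) powr e = (pi * lam * G) powr (- \<gamma>/2 - 1) / \<gamma>\<^sup>2"
  proof -
    have "P powr e = \<gamma>\<^sup>2" using \<gamma> by (simp add: P_def e_def powr_powr field_simps)
    moreover have "- \<gamma>/2 - 1 = - e" by (simp add: e_def)
    ultimately show ?thesis
      using lam G by (simp add: A_def powr_divide powr_mult powr_minus_divide)
  qed
  finally show ?thesis
    unfolding CRB_LB_N_def Zfun_zero_coeff_def using \<gamma>
    by (simp add: A_def G_def P_def e_def add_ac mult_ac)
qed

lemma abs_CRB_LB_N_minus_CRB_LB_le: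
  fixes lam \<gamma> c \<rho> We :: real
  assumes lam: "lam > 0" and \<gamma>: "\<gamma> > 2" and \<rho>: "\<rho> > 0" and We: "We \<ge> 0"
  shows "\<bar>CRB_LB_N lam \<gamma> \<rho> - CRB_LB lam \<gamma> c \<rho> We\<bar> \<le> 4 / \<rho> * (2 * pi * lam * Zfun_We_coeff \<gamma> c) *
    (LBINT s:{0<..}. s powr (4/(\<gamma> + 2)) * exp (- (2 * pi * lam * Zfun_zero_coeff \<gamma> * s powr (2/(\<gamma> + 2))))) * We"
proof -
  define A b q where "A = 2 * pi * lam * Zfun_zero_coeff \<gamma>" and "b = 2/(\<gamma> + 2)" and "q = 4/(\<gamma> + 2)"
  have A: "A > 0" using lam \<gamma> by (simp add: A_def Zfun_zero_coeff_def)
  have b: "b > 0" and "q > 0" using \<gamma> by (simp_all add: b_def q_def)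
  then have q: "q > -1" by simp
  have CRB_LB_N: "CRB_LB_N lam \<gamma> \<rho> = 4 / \<rho> * (LBINT s:{0<..}. exp (- (A * s powr b)))"
    using CRB_LB_N_eq[OF lam, of \<gamma> \<rho>] \<gamma> by (simp add: A_def b_def)
  have CRB_LB: "CRB_LB lam \<gamma> c \<rho> We = 4 / \<rho> * (LBINT s:{0<..}. exp (- (2 * pi * lam * Zfun \<gamma> c We s)))"
    unfolding CRB_LB_def by simp
  have "\<bar>CRB_LB_N lam \<gamma> \<rho> - CRB_LB lam \<gamma> c \<rho> We\<bar> = 4 / \<rho> *
      \<bar>(LBINT s:{0<..}. exp (- (A * s powr b))) - (LBINT s:{0<..}. exp (- (2 * pi * lam * Zfun \<gamma> c We s)))\<bar>"
    unfolding CRB_LB_N CRB_LB right_diff_distrib[symmetric] abs_mult using \<rho> by simp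
  also have "\<dots> \<le> 4 / \<rho> * ((2 * pi * lam * Zfun_We_coeff \<gamma> c * We) * (LBINT s:{0<..}. s powr q * exp (- (A * s powr b))))"
  proof (intro mult_left_mono set_integral_exp_neg_perturbation)
    show "set_integrable lborel {0<..} (\<lambda>s. exp (- (A * s powr b)))"
      using set_integral_powr_exp_neg_powr(1)[OF A b, of 0]
      by (rule set_integrable_cong[THEN iffD1, rotated -1]) auto
    fix s :: real assume "s \<in> {0<..}"
    then have lower: "Zfun_zero_coeff \<gamma> * s powr b \<le> Zfun \<gamma> c We s"
      and upper: "Zfun \<gamma> c We s \<le> Zfun_zero_coeff \<gamma> * s powr b + We * Zfun_We_coeff \<gamma> c * s powr q"
      using Zfun_bounds[OF \<gamma> We] by (simp_all add: b_def q_def)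
    from lower show "A * s powr b \<le> 2 * pi * lam * Zfun \<gamma> c We s"
      using lam by (simp add: A_def)
    from upper have "2 * pi * lam * Zfun \<gamma> c We s
        \<le> 2 * pi * lam * (Zfun_zero_coeff \<gamma> * s powr b + We * Zfun_We_coeff \<gamma> c * s powr q)"
      using lam by (intro mult_left_mono) auto
    then show "2 * pi * lam * Zfun \<gamma> c We s \<le> A * s powr b + 2 * pi * lam * Zfun_We_coeff \<gamma> c * We * s powr q"
      by (simp add: A_def algebra_simps)
  qed (use set_integral_powr_exp_neg_powr(1)[OF A b q] borel_measurable_Zfun \<rho> in auto)
  finally show ?thesis by (simp add: A_def b_def q_def mult_ac)
qed

theorem corollary2:
  fixes lam \<gamma> c \<rho> :: real
  assumes "lam > 0" and "\<gamma> > 2" and "c > 0" and "\<rho> > 0"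
  shows "\<exists>C. \<forall>We > 0. \<bar>CRB_LB_N lam \<gamma> \<rho> - CRB_LB lam \<gamma> c \<rho> We\<bar> \<le> C * We"
  using abs_CRB_LB_N_minus_CRB_LB_le[OF assms(1,2,4)] by (meson less_imp_le)

end
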